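(* Let $q=2$. Under $G_2$ there are exactly $4$ plane orbits and $4$ point orbits, namely: planes: $\mathcal N_1=\{\Gamma\text{-planes}\}\cup\{\overline{1_{\mathscr C}}\text{-planes}\}$ of size $3+3=6$; $\mathcal N_2=\{2_{\mathscr C}\text{-planes}\}$ of size $6$; $\mathcal N_3=\{3_{\mathscr C}\text{-planes}\}$ of size $1$; $\mathcal N_4=\{0_{\mathscr C}\text{-planes}\}$ of size $2$; points: $\mathcal M_1=\{\mathscr C\text{-points}\}$ of size $3$; $\mathcal M_2=\{\text{T-points}\}\cup\{0_\Gamma\text{-points}\}$ of size $6+2=8$; $\mathcal M_3=\{3_\Gamma\text{-points}\}$ of size $1$; $\mathcal M_4=\{1_\Gamma\text{-points}\}$ of size $3$.
   Context: Notation. $\mathbb F_q$ is the field with $q$ elements, $\mathbb F_q^+=\mathbb F_q\cup\{\infty\}$. Points of $\mathrm{PG}(3,q)$ are written $\mathbf P(x_0,x_1,x_2,x_3)$ with $x$ a nonzero row vector up to scalars; $\boldsymbol\pi(c_0,c_1,c_2,c_3)$ is the plane $c_0x_0+c_1x_1+c_2x_2+c_3x_3=0$. Put $P(t)=\mathbf P(t^3,t^2,t,1)$ for $t\in\mathbb F_q$, $P(\infty)=\mathbf P(1,0,0,0)$, and $\mathscr C=\{P(t):t\in\mathbb F_q^+\}$ (the twisted cubic). The osculating planes are $\pi_{\rm osc}(t)=\boldsymbol\pi(1,-3t,3t^2,-t^3)$ ($t\in\mathbb F_q$) and $\pi_{\rm osc}(\infty)=\boldsymbol\pi(0,0,0,1)$;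 these $q+1$ planes are called $\Gamma$-planes. The tangent at $P(t)$, $t\in\mathbb F_q$, is the line through $P(t)$ and $\mathbf P(3t^2,2t,1,0)$; the tangent at $P(\infty)$ is the line through $\mathbf P(1,0,0,0)$ and $\mathbf P(0,1,0,0)$. $G_q$ is the group of all projectivities of $\mathrm{PG}(3,q)$ mapping $\mathscr C$ onto itself. Plane types: $\Gamma$-plane = osculating plane; $\overline{1_{\mathscr C}}$-plane = non-osculating plane meeting $\mathscr C$ in exactly one point; $d_{\mathscr C}$-plane ($d\in\{0,2,3\}$) = plane meeting $\mathscr C$ in exactly $d$ points. Point types (for $q\not\equiv0\pmod 3$): $\mathscr C$-point = point of $\mathscr C$; T-point = point off $\mathscr C$ on some tangent; for $\mu\in\{0,1,3\}$, $\mu_\Gamma$-point = point off $\mathscr C$, on no tangent, lying on exactly $\mu$ $\Gamma$-planes. *)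

theory Defs
  imports "HOL-Analysis.Analysis" "HOL-Library.Z2"
begin

text \<open>Projective space PG(3,q) over a field 'a: vectors are 'a^4 (coordinate i = 1..4
  corresponds to x_0..x_3); a point is the set of nonzero scalar multiples of a nonzero
  vector; a plane is identified with the set of points lying on it.\<close>

type_synonym 'a pt = "('a ^ 4) set"

definition Pt :: "'a::field ^ 4 \<Rightarrow> 'a pt" where
  "Pt x = {c *s x | c. c \<noteq> 0}"

definition points :: "'a::field pt set" where
  "points = {Pt x | x. x \<noteq> 0}"

definition pdot :: "'a::field ^ 4 \<Rightarrow> 'a ^ 4 \<Rightarrow> 'a" where
  "pdot c x = (\<Sum>i\<in>UNIV. c $ i * x $ i)"

definition plane :: "'a::field ^ 4 \<Rightarrow> 'a pt set" where
  "plane c = {Pt x | x. x \<noteq> 0 \<and> pdot c x = 0}"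

definition planes :: "'a::field pt set set" where
  "planes = {plane c | c. c \<noteq> 0}"

definition line :: "'a::field ^ 4 \<Rightarrow> 'a ^ 4 \<Rightarrow> 'a pt set" where
  "line u v = {Pt (a *s u + b *s v) | a b. a *s u + b *s v \<noteq> 0}"

text \<open>Twisted cubic; None stands for the parameter infinity.\<close>
definition cubvec :: "'a::field option \<Rightarrow> 'a ^ 4" where
  "cubvec t = (case t of None \<Rightarrow> vector [1, 0, 0, 0]
                       | Some s \<Rightarrow> vector [s ^ 3, s ^ 2, s, 1])"

definition Cub :: "'a::field pt set" where
  "Cub = {Pt (cubvec t) | t. True}"

definition osc :: "'a::field option \<Rightarrow> 'a pt set" where
  "osc t = (case t of None \<Rightarrow> plane (vector [0, 0, 0, 1])
                    | Some s \<Rightarrow> plane (vector [1, - 3 * s, 3 * s ^ 2, - (s ^ 3)]))"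

definition tangent :: "'a::field option \<Rightarrow> 'a pt set" where
  "tangent t = (case t of None \<Rightarrow> line (vector [1, 0, 0, 0]) (vector [0, 1, 0, 0])
                        | Some s \<Rightarrow> line (cubvec (Some s)) (vector [3 * s ^ 2, 2 * s, 1, 0]))"

definition Gamma_planes :: "'a::field pt set set" where
  "Gamma_planes = {osc t | t. True}"

definition onebar_planes :: "'a::field pt set set" where
  "onebar_planes = {\<pi> \<in> planes. \<pi> \<notin> Gamma_planes \<and> card (\<pi> \<inter> Cub) = 1}"

definition dC_planes :: "nat \<Rightarrow> 'a::field pt set set" where
  "dC_planes d = {\<pi> \<in> planes. card (\<pi> \<inter> Cub) = d}"

definition C_points :: "'a::field pt set" where
  "C_points = Cub"

definition T_points :: "'a::field pt set" where
  "T_points = {P \<in> points. P \<notin> Cub \<and> (\<exists>t. P \<in> tangent t)}"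

definition muGamma_points :: "nat \<Rightarrow> 'a::field pt set" where
  "muGamma_points mu = {P \<in> points. P \<notin> Cub \<and> (\<forall>t. P \<notin> tangent t)
                          \<and> card {\<pi> \<in> Gamma_planes. P \<in> \<pi>} = mu}"

definition proj_pt :: "'a::field ^ 4 ^ 4 \<Rightarrow> 'a pt \<Rightarrow> 'a pt" where
  "proj_pt A P = (\<lambda>x. x v* A) ` P"

definition proj_plane :: "'a::field ^ 4 ^ 4 \<Rightarrow> 'a pt set \<Rightarrow> 'a pt set" where
  "proj_plane A \<pi> = proj_pt A ` \<pi>"

definition Gq :: "('a::field ^ 4 ^ 4) set" where
  "Gq = {A. invertible A \<and> proj_pt A ` Cub = Cub}"

definition plane_orbits :: "'a::field pt set set set" where
  "plane_orbits = {{proj_plane A \<pi> | A. A \<in> Gq} | \<pi>. \<pi> \<in> planes}"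

definition point_orbits :: "'a::field pt set set" where
  "point_orbits = {{proj_pt A P | A. A \<in> Gq} | P. P \<in> points}"

end

theory Submission
  imports Defs
begin

text \<open>Over GF(2) a point of PG(3,2) has a unique nonzero representative, so points, planes and
  the three points of the cubic are explicit vectors and every class in the statement can be
  computed. Each class is invariant under \<open>G\<^sub>2\<close>. For planes this is because a projectivity
  preserving the cubic preserves \<open>|\<pi> \<inter> C|\<close>. For points, \<open>x \<mapsto> x A\<close> is linear and
  permutes the three cubic vectors \<open>c\<^sub>1, c\<^sub>2, c\<^sub>3\<close>, so it preserves the set of sums
  of \<open>k\<close> distinct \<open>c\<^sub>i\<close>: the cubic for \<open>k = 1\<close>, the \<open>1\<^sub>\<Gamma>\<close>-points for \<open>k = 2\<close>,
  the \<open>3\<^sub>\<Gamma>\<close>-point for \<open>k = 3\<close>. Together these fill the unique \<open>3\<^sub>C\<close>-plane, whose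
  complement (the T-points and \<open>0\<^sub>\<Gamma>\<close>-points) is therefore invariant too. Conversely,
  three explicit involutions in \<open>G\<^sub>2\<close> carry one member of each class to all the others,
  and invariant classes each contained in the orbit of one of their members are exactly
  the orbits.\<close>

section \<open>Orbits of \<open>G\<^sub>q\<close>\<close>

lemma proj_pt_mult: "proj_pt (A ** B) P = proj_pt B (proj_pt A P)"
  unfolding proj_pt_def image_image vector_matrix_mul_assoc ..

lemma proj_pt_mat_1 [simp]: "proj_pt (mat 1) P = P"
  unfolding proj_pt_def by simp

lemma proj_plane_mult: "proj_plane (A ** B) \<pi> = proj_plane B (proj_plane A \<pi>)"
  unfolding proj_plane_def image_image proj_pt_mult ..

lemma proj_plane_mat_1 [simp]: "proj_plane (mat 1) \<pi> = \<pi>"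
  unfolding proj_plane_def by simp

lemma mat_1_in_Gq: "mat 1 \<in> Gq"
  unfolding Gq_def invertible_def by auto

lemma Gq_mult: "A \<in> Gq \<Longrightarrow> B \<in> Gq \<Longrightarrow> A ** B \<in> Gq"
  unfolding Gq_def by (simp add: invertible_mult proj_pt_mult flip: image_image)

lemma Gq_inverse:
  assumes "A \<in> Gq"
  obtains A' where "A' \<in> Gq" "A ** A' = mat 1" "A' ** A = mat 1"
proof -
  from assms obtain A' where AA': "A ** A' = mat 1" "A' ** A = mat 1"
    and Cub: "proj_pt A ` Cub = Cub"
    unfolding Gq_def invertible_def by blast
  have "proj_pt A' ` Cub = proj_pt (A ** A') ` Cub"
    by (subst Cub[symmetric]) (simp add: image_image proj_pt_mult)
  with AA' have "A' \<in> Gq"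
    unfolding Gq_def invertible_def by auto
  with AA' show thesis using that by blast
qed

locale Gq_action =
  fixes act :: "'a::field ^ 4 ^ 4 \<Rightarrow> 'b \<Rightarrow> 'b"
  assumes act_mult: "act (A ** B) x = act B (act A x)"
    and act_mat_1: "act (mat 1) x = x"
begin

definition orbit :: "'b \<Rightarrow> 'b set" where
  "orbit x = {act A x | A. A \<in> Gq}"

definition invariant :: "'b set \<Rightarrow> bool" where
  "invariant K \<longleftrightarrow> (\<forall>A \<in> Gq. \<forall>y \<in> K. act A y \<in> K)"

definition expand :: "('a ^ 4 ^ 4) set \<Rightarrow> 'b set \<Rightarrow> 'b set" where
  "expand gs S = S \<union> (\<Union>g \<in> gs. act g ` S)"

lemma orbit_self: "x \<in> orbit x"
  unfolding orbit_def by (metis (mono_tags, lifting) mem_Collect_eq mat_1_in_Gq act_mat_1)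

lemma orbit_step: "y \<in> orbit x \<Longrightarrow> A \<in> Gq \<Longrightarrow> act A y \<in> orbit x"
  unfolding orbit_def by (auto simp flip: act_mult intro: Gq_mult)

lemma orbit_subset: "invariant K \<Longrightarrow> x \<in> K \<Longrightarrow> orbit x \<subseteq> K"
  unfolding invariant_def orbit_def by blast

lemma orbit_sym: assumes "y \<in> orbit x" shows "x \<in> orbit y"
proof -
  from assms obtain A where "A \<in> Gq" and y: "y = act A x"
    unfolding orbit_def by blast
  then obtain A' where "A' \<in> Gq" "A ** A' = mat 1"
    by (metis Gq_inverse)
  then have "x = act A' y"
    by (simp add: y act_mat_1 flip: act_mult)
  with orbit_step[OF orbit_self \<open>A' \<in> Gq\<close>] show ?thesis by simp
qed

lemma orbit_eq: assumes "y \<in> orbit x" shows "orbit y = orbit x"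
proof -
  have "orbit y \<subseteq> orbit x" if "y \<in> orbit x" for x y
    using that by (auto simp: orbit_def simp flip: act_mult intro: Gq_mult)
  with assms orbit_sym show ?thesis by blast
qed

lemma invariant_Diff:
  assumes "invariant U" "invariant K" shows "invariant (U - K)"
  unfolding invariant_def
proof (intro ballI)
  fix A :: "'a ^ 4 ^ 4" and y assume "A \<in> Gq" "y \<in> U - K"
  then obtain A' where "A' \<in> Gq" "A ** A' = mat 1"
    by (metis Gq_inverse)
  then have "act A' (act A y) = y" by (simp add: act_mat_1 flip: act_mult)
  with \<open>A' \<in> Gq\<close> \<open>A \<in> Gq\<close> \<open>y \<in> U - K\<close> assms show "act A y \<in> U - K"
    unfolding invariant_def by (metis Diff_iff)
qed

lemma expand_subset_orbit:
  "gs \<subseteq> Gq \<Longrightarrow> S \<subseteq> orbit x \<Longrightarrow> expand gs S \<subseteq> orbit x"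
  unfolding expand_def using orbit_step by blast

lemma funpow_expand_subset_orbit: "gs \<subseteq> Gq \<Longrightarrow> (expand gs ^^ n) {x} \<subseteq> orbit x"
  by (induction n) (simp_all add: orbit_self expand_subset_orbit)

lemma orbits_eq_classes:
  assumes cover: "\<Union>Ks = U"
    and invariant: "\<And>K. K \<in> Ks \<Longrightarrow> invariant K"
    and reachable: "\<And>K. K \<in> Ks \<Longrightarrow> \<exists>x \<in> K. K \<subseteq> orbit x"
  shows "{orbit x | x. x \<in> U} = Ks"
proof -
  have orbit_class: "orbit y = K" if "K \<in> Ks" "y \<in> K" for K y
  proof -
    from reachable[OF \<open>K \<in> Ks\<close>] obtain x where "x \<in> K" "K \<subseteq> orbit x"
      by blast
    with invariant[OF \<open>K \<in> Ks\<close>] have "orbit x = K" using orbit_subset by blast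
    with \<open>y \<in> K\<close> show ?thesis using orbit_eq by blast
  qed
  have "K \<noteq> {}" if "K \<in> Ks" for K
    using reachable[OF that] by blast
  then show ?thesis
    using cover orbit_class by blast
qed

end

interpretation pt: Gq_action proj_pt
  by unfold_locales (rule proj_pt_mult proj_pt_mat_1)+

interpretation pl: Gq_action proj_plane
  by unfold_locales (rule proj_plane_mult proj_plane_mat_1)+

lemma point_orbits_eq: "point_orbits = {pt.orbit P | P. P \<in> points}"
  unfolding point_orbits_def pt.orbit_def ..

lemma plane_orbits_eq: "plane_orbits = {pl.orbit \<pi> | \<pi>. \<pi> \<in> planes}"
  unfolding plane_orbits_def pl.orbit_def ..

section \<open>Invariant sets of points and planes\<close>

lemma proj_pt_Pt: "proj_pt A (Pt x) = Pt (x v* A)"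
  unfolding proj_pt_def Pt_def
  by (auto simp: scalar_vector_matrix_assoc image_iff) (metis scalar_vector_matrix_assoc)

lemma proj_pt_singleton: "proj_pt A {x} = {x v* A}"
  unfolding proj_pt_def by simp

lemma pdot_vector_matrix: "pdot c (x v* A) = pdot (A *v c) x"
  unfolding pdot_def vector_matrix_mult_def matrix_vector_mult_def
  by (simp add: sum_distrib_left sum_distrib_right ac_simps) (rule sum.swap)

lemma vector_matrix_right_inverse:
  "A ** A' = mat 1 \<Longrightarrow> (x v* A) v* A' = x"
  by (simp add: vector_matrix_mul_assoc)

lemma inj_vector_matrix_Gq: "A \<in> Gq \<Longrightarrow> inj (\<lambda>x. x v* A)"
  by (metis Gq_inverse inj_on_inverseI vector_matrix_right_inverse)

lemma proj_plane_plane: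
  assumes "A ** A' = mat 1" "A' ** A = mat 1"
  shows "proj_plane A (plane c) = plane (A' *v c)"
proof -
  have "proj_plane A (plane c) = {Pt (x v* A) | x. x \<noteq> 0 \<and> pdot c x = 0}"
    unfolding proj_plane_def plane_def by (auto simp: proj_pt_Pt image_iff) (metis proj_pt_Pt)
  also have "\<dots> = plane (A' *v c)"
    unfolding plane_def
  proof (intro equalityI subsetI; clarify)
    fix x :: "'a ^ 4" assume "x \<noteq> 0" "pdot c x = 0"
    then show "\<exists>y. Pt (x v* A) = Pt y \<and> y \<noteq> 0 \<and> pdot (A' *v c) y = 0"
      using vector_matrix_right_inverse[OF assms(1), of x]
      by (metis pdot_vector_matrix vector_matrix_mult_0)
  next
    fix y :: "'a ^ 4" assume "y \<noteq> 0" "pdot (A' *v c) y = 0"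
    then show "\<exists>x. Pt y = Pt (x v* A) \<and> x \<noteq> 0 \<and> pdot c x = 0"
      using vector_matrix_right_inverse[OF assms(2), of y]
      by (metis pdot_vector_matrix vector_matrix_mult_0)
  qed
  finally show ?thesis .
qed

lemma points_invariant: "pt.invariant points"
  unfolding pt.invariant_def points_def
proof clarify
  fix A :: "'a::field ^ 4 ^ 4" and x :: "'a ^ 4"
  assume "A \<in> Gq" "x \<noteq> 0"
  then obtain A' where "A ** A' = mat 1" by (metis Gq_inverse)
  with \<open>x \<noteq> 0\<close> have "x v* A \<noteq> 0"
    by (metis vector_matrix_right_inverse vector_matrix_mult_0)
  then show "\<exists>y. proj_pt A (Pt x) = Pt y \<and> y \<noteq> 0"
    by (auto simp: proj_pt_Pt)
qed

lemma planes_invariant: "pl.invariant planes"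
  unfolding pl.invariant_def planes_def
proof clarify
  fix A :: "'a::field ^ 4 ^ 4" and c :: "'a ^ 4"
  assume "A \<in> Gq" "c \<noteq> 0"
  then obtain A' where A': "A ** A' = mat 1" "A' ** A = mat 1" by (metis Gq_inverse)
  with \<open>c \<noteq> 0\<close> have "A' *v c \<noteq> 0"
    by (metis matrix_vector_mul_assoc matrix_vector_mul_lid matrix_vector_mult_0_right)
  then show "\<exists>d. proj_plane A (plane c) = plane d \<and> d \<noteq> 0"
    using proj_plane_plane[OF A'] by blast
qed

lemma card_proj_plane_Int_Cub:
  assumes "A \<in> Gq"
  shows "card (proj_plane A \<pi> \<inter> Cub) = card (\<pi> \<inter> Cub)"
proof -
  obtain A' where "A ** A' = mat 1" using assms by (metis Gq_inverse)
  then have inj: "inj (proj_pt A)"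
    by (metis inj_on_inverseI proj_pt_mult proj_pt_mat_1)
  have "proj_plane A \<pi> \<inter> Cub = proj_pt A ` (\<pi> \<inter> Cub)"
    using assms unfolding proj_plane_def Gq_def by (auto simp: image_Int[OF inj])
  then show ?thesis
    by (simp add: card_image inj_on_subset[OF inj])
qed

lemma dC_planes_invariant: "pl.invariant (dC_planes d)"
  using planes_invariant card_proj_plane_Int_Cub
  unfolding pl.invariant_def dC_planes_def by auto

lemma Cub_invariant: "pt.invariant Cub"
  unfolding pt.invariant_def Gq_def by blast

lemma invariant_plane_points: "pl.invariant {\<pi>} \<Longrightarrow> pt.invariant \<pi>"
  unfolding pl.invariant_def pt.invariant_def proj_plane_def by blast

abbreviation singletons :: "'b set \<Rightarrow> 'b set set" where
  "singletons S \<equiv> (\<lambda>x. {x}) ` S"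

lemma invariant_singletons:
  assumes "\<And>A x. A \<in> Gq \<Longrightarrow> x \<in> K \<Longrightarrow> x v* A \<in> K"
  shows "pt.invariant (singletons K)"
  using assms unfolding pt.invariant_def by (auto simp: proj_pt_singleton)

definition subset_sums :: "nat \<Rightarrow> 'a::comm_monoid_add set \<Rightarrow> 'a set" where
  "subset_sums k C = (\<lambda>S. \<Sum>S) ` {S. S \<subseteq> C \<and> card S = k}"

lemma subset_sums_image_subset:
  assumes additive: "\<And>x y. f (x + y) = f x + f y" "f 0 = 0" and inj: "inj_on f C"
  shows "f ` subset_sums k C \<subseteq> subset_sums k (f ` C)"
proof
  fix y assume "y \<in> f ` subset_sums k C"
  then obtain S where S: "S \<subseteq> C" "card S = k" and y: "y = f (\<Sum>S)"
    unfolding subset_sums_def by auto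
  have inj_S: "inj_on f S" using inj_on_subset[OF inj S(1)] .
  have "f (\<Sum>S) = sum f S"
    using sum_comp_morphism[of f id S] additive by simp
  also have "\<dots> = \<Sum>(f ` S)"
    using sum.reindex[OF inj_S, of id] by simp
  finally have "y = \<Sum>(f ` S)" using y by simp
  moreover have "f ` S \<subseteq> f ` C" "card (f ` S) = k"
    using S card_image[OF inj_S] by auto
  ultimately show "y \<in> subset_sums k (f ` C)"
    unfolding subset_sums_def by blast
qed

lemma subset_sums_three:
  fixes a b c :: "'a::comm_monoid_add"
  assumes "a \<noteq> b" "a \<noteq> c" "b \<noteq> c"
  shows "subset_sums 2 {a, b, c} = {a + b, a + c, b + c}"
    and "subset_sums 3 {a, b, c} = {a + b + c}"
proof -
  have "S = {a, b} \<or> S = {a, c} \<or> S = {b, c}"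
    if sub: "S \<subseteq> {a, b, c}" and card: "card S = 2" for S
  proof -
    obtain x y where S: "S = {x, y}" "x \<noteq> y"
      using card card_2_iff by metis
    then have "x \<in> {a, b, c}" "y \<in> {a, b, c}"
      using sub by auto
    with S show ?thesis by (auto simp: insert_commute)
  qed
  then have "{S. S \<subseteq> {a, b, c} \<and> card S = 2} = {{a, b}, {a, c}, {b, c}}"
    using assms by auto
  then show "subset_sums 2 {a, b, c} = {a + b, a + c, b + c}"
    unfolding subset_sums_def using assms by simp
  have "card {a, b, c} = 3" using assms by simp
  then have "S = {a, b, c}" if "S \<subseteq> {a, b, c}" "card S = 3" for S
    using card_subset_eq[OF _ that(1)] that(2) by simp
  then have "{S. S \<subseteq> {a, b, c} \<and> card S = 3} = {{a, b, c}}"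
    using \<open>card {a, b, c} = 3\<close> by auto
  then show "subset_sums 3 {a, b, c} = {a + b + c}"
    unfolding subset_sums_def using assms by (simp add: add.assoc)
qed

lemma vector_4 [simp]:
  "(vector [x, y, z, w] :: 'a::zero ^ 4) $ 1 = x"
  "(vector [x, y, z, w] :: 'a ^ 4) $ 2 = y"
  "(vector [x, y, z, w] :: 'a ^ 4) $ 3 = z"
  "(vector [x, y, z, w] :: 'a ^ 4) $ 4 = w"
  unfolding vector_def by simp_all

lemma vector_4_eq_iff [simp]:
  "(vector [a, b, c, d] :: 'a::zero ^ 4) = vector [a', b', c', d']
    \<longleftrightarrow> a = a' \<and> b = b' \<and> c = c' \<and> d = d'"
  by (auto simp: vec_eq_iff forall_4)

lemma vec_4_eta: "(x :: 'a::zero ^ 4) = vector [x $ 1, x $ 2, x $ 3, x $ 4]"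
  by (simp add: vec_eq_iff forall_4)

lemma zero_vec_4: "(0 :: 'a::zero ^ 4) = vector [0, 0, 0, 0]"
  by (simp add: vec_eq_iff forall_4)

lemma plus_vector_4 [simp]:
  "vector [a, b, c, d] + vector [a', b', c', d'] =
    (vector [a + a', b + b', c + c', d + d'] :: 'a::monoid_add ^ 4)"
  by (simp add: vec_eq_iff forall_4)

lemma scalar_vector_4 [simp]: "k *s (vector [a, b, c, d] :: 'a::ring ^ 4) = vector [k * a, k * b, k * c, k * d]"
  by (simp add: vec_eq_iff forall_4)

lemma pdot_vector_4 [simp]:
  "pdot (vector [a, b, c, d]) (vector [a', b', c', d']) = a * a' + b * b' + c * c' + d * d'"
  by (simp add: pdot_def sum_4)

lemma vector_4_matrix_mult:
  "(vector [a, b, c, d] :: 'a::field ^ 4) v* M = a *s M $ 1 + b *s M $ 2 + c *s M $ 3 + d *s M $ 4"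
  by (simp add: vector_matrix_mult_def vec_eq_iff sum_4 forall_4 mult.commute)

lemma matrix_vector_4_mult:
  "(M :: 'a::field ^ 4 ^ 4) *v x = vector [pdot (M $ 1) x, pdot (M $ 2) x, pdot (M $ 3) x, pdot (M $ 4) x]"
  by (simp add: matrix_vector_mult_def vec_eq_iff forall_4 pdot_def)

lemma vector_4_matrix_mult_matrix:
  "(vector [r1, r2, r3, r4] :: 'a::field ^ 4 ^ 4) ** B = vector [r1 v* B, r2 v* B, r3 v* B, r4 v* B]"
  by (simp add: vec_eq_iff forall_4 matrix_matrix_mult_def vector_matrix_mult_def mult.commute)

lemma mat_1_vector_4: "(mat 1 :: 'a::field ^ 4 ^ 4) =
    vector [vector [1, 0, 0, 0], vector [0, 1, 0, 0], vector [0, 0, 1, 0], vector [0, 0, 0, 1]]"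
  by (simp add: vec_eq_iff forall_4 mat_def)

section \<open>The classes of PG(3,2)\<close>

abbreviation V4 :: "bit \<Rightarrow> bit \<Rightarrow> bit \<Rightarrow> bit \<Rightarrow> bit ^ 4" where
  "V4 a b c d \<equiv> vector [a, b, c, d]"

lemma forall_bit: "(\<forall>a :: bit. P a) \<longleftrightarrow> P 0 \<and> P 1"
  by (metis bit_not_zero_iff)

lemma ex_bit: "(\<exists>a :: bit. P a) \<longleftrightarrow> P 0 \<or> P 1"
  by (metis bit_not_zero_iff)

lemma UNIV_option_bit: "(UNIV :: bit option set) = {None, Some 0, Some 1}"
proof -
  have "t \<in> {None, Some 0, Some 1}" for t :: "bit option"
    by (cases t) auto
  then show ?thesis by blast
qed

lemma Collect_bit_vec_4_eqI:
  assumes "\<forall>a b c d. P (V4 a b c d) \<longleftrightarrow> V4 a b c d \<in> S"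
  shows "{x. P x} = S"
  using assms by (metis (mono_tags) mem_Collect_eq subsetI subset_antisym vec_4_eta)

lemma Pt_bit: "Pt (x :: bit ^ 4) = {x}"
  unfolding Pt_def by auto

lemma points_bit: "(points :: bit pt set) = singletons (- {0})"
  unfolding points_def Pt_bit by auto

lemma plane_bit: "plane (c :: bit ^ 4) = singletons {x. x \<noteq> 0 \<and> pdot c x = 0}"
  unfolding plane_def Pt_bit by auto

lemma planes_bit: "(planes :: bit pt set set) = plane ` (- {0})"
  unfolding planes_def by auto

lemma inj_plane_bit: "inj (plane :: bit ^ 4 \<Rightarrow> _)"
proof (rule injI)
  fix c c' :: "bit ^ 4"
  assume "plane c = plane c'"
  then have "{x. x \<noteq> 0 \<and> pdot c x = 0} = {x. x \<noteq> 0 \<and> pdot c' x = 0}"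
    unfolding plane_bit by (simp add: inj_image_eq_iff inj_def)
  then have "pdot c x = 0 \<longleftrightarrow> pdot c' x = 0" if "x \<noteq> 0" for x
    using that unfolding set_eq_iff by blast
  note unit_vectors = this[of "V4 1 0 0 0"] this[of "V4 0 1 0 0"] this[of "V4 0 0 1 0"] this[of "V4 0 0 0 1"]
  obtain a b d e where c: "c = V4 a b d e" by (metis vec_4_eta)
  obtain a' b' d' e' where c': "c' = V4 a' b' d' e'" by (metis vec_4_eta)
  show "c = c'"
    using unit_vectors unfolding c c' by (simp add: zero_vec_4) (metis bit_not_zero_iff)
qed

lemma card_plane_image_bit: "card (plane ` (S :: (bit ^ 4) set)) = card S"
  using inj_plane_bit by (simp add: card_image inj_on_subset)

lemma card_singletons: "card (singletons S) = card S"
  by (simp add: card_image)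

definition cubic_vecs :: "(bit ^ 4) set" where
  "cubic_vecs = {V4 1 0 0 0, V4 0 0 0 1, V4 1 1 1 1}"

definition osc_coeffs :: "(bit ^ 4) set" where
  "osc_coeffs = {V4 0 0 0 1, V4 1 0 0 0, V4 1 1 1 1}"

definition tangent_vecs :: "(bit ^ 4) set" where
  "tangent_vecs = {V4 1 0 0 0, V4 0 1 0 0, V4 1 1 0 0, V4 0 0 0 1, V4 0 0 1 0, V4 0 0 1 1,
                   V4 1 1 1 1, V4 1 0 1 0, V4 0 1 0 1}"

lemma Cub_bit: "(Cub :: bit pt set) = singletons cubic_vecs"
proof -
  have "(Cub :: bit pt set) = (\<lambda>t. {cubvec t}) ` UNIV"
    unfolding Cub_def Pt_bit by (simp add: full_SetCompr_eq)
  then show ?thesis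
    unfolding cubic_vecs_def UNIV_option_bit by (simp add: cubvec_def)
qed

lemma card_Cub_bit: "card (Cub :: bit pt set) = 3"
  unfolding Cub_bit cubic_vecs_def by (simp add: card_image)

lemma singleton_in_Cub_bit: "{x} \<in> Cub \<longleftrightarrow> x \<in> cubic_vecs"
  unfolding Cub_bit by auto

lemma singletons_Collect: "{P \<in> singletons S. Q P} = singletons {x \<in> S. Q {x}}"
  by auto

lemma Gamma_planes_bit: "(Gamma_planes :: bit pt set set) = plane ` osc_coeffs"
proof -
  have "(Gamma_planes :: bit pt set set) = osc ` UNIV"
    unfolding Gamma_planes_def by (simp add: full_SetCompr_eq)
  then show ?thesis
    unfolding osc_coeffs_def UNIV_option_bit by (simp add: osc_def)
qed

lemma line_bit: "line (u :: bit ^ 4) v = singletons ({u, v, u + v} - {0})"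
  unfolding line_def Pt_bit by (auto simp: ex_bit)

lemma on_tangent_bit: "(\<exists>t. {x} \<in> tangent t) \<longleftrightarrow> x \<in> tangent_vecs"
proof -
  have "(\<exists>t. {x} \<in> tangent t) \<longleftrightarrow> (\<exists>t \<in> UNIV. {x} \<in> tangent t)"
    by simp
  then show ?thesis
    unfolding UNIV_option_bit tangent_vecs_def
    by (auto simp: tangent_def line_bit cubvec_def zero_vec_4)
qed

lemma card_plane_Int_Cub_bit: "card (plane c \<inter> Cub) = card (cubic_vecs \<inter> {x. pdot c x = 0})"
proof -
  have "{x. x \<noteq> 0 \<and> pdot c x = 0} \<inter> cubic_vecs = (cubic_vecs \<inter> {x. pdot c x = 0})"
    unfolding cubic_vecs_def by (auto simp: zero_vec_4)
  then have "plane c \<inter> Cub = singletons (cubic_vecs \<inter> {x. pdot c x = 0})"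
    unfolding plane_bit Cub_bit by (simp flip: image_Int)
  then show ?thesis by (simp add: card_image)
qed

lemma dC_planes_bit:
  "dC_planes d = plane ` {c. c \<noteq> 0 \<and> card (cubic_vecs \<inter> {x. pdot c x = 0}) = d}"
  unfolding dC_planes_def planes_bit by (auto simp: card_plane_Int_Cub_bit)

lemma dC_planes_0_bit: "dC_planes 0 = plane ` {V4 1 0 1 1, V4 1 1 0 1}"
  unfolding dC_planes_bit
  by (rule arg_cong[where f = "image plane"], rule Collect_bit_vec_4_eqI)
    (simp add: forall_bit zero_vec_4 cubic_vecs_def Int_insert_left)

lemma dC_planes_1_bit:
  "dC_planes 1 = plane ` {V4 0 0 0 1, V4 0 1 1 1, V4 1 0 0 0, V4 1 0 0 1, V4 1 1 1 0, V4 1 1 1 1}"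
  unfolding dC_planes_bit
  by (rule arg_cong[where f = "image plane"], rule Collect_bit_vec_4_eqI)
    (simp add: forall_bit zero_vec_4 cubic_vecs_def Int_insert_left)

lemma dC_planes_2_bit:
  "dC_planes 2 = plane ` {V4 0 0 1 0, V4 0 0 1 1, V4 0 1 0 0, V4 0 1 0 1, V4 1 0 1 0, V4 1 1 0 0}"
  unfolding dC_planes_bit
  by (rule arg_cong[where f = "image plane"], rule Collect_bit_vec_4_eqI)
    (simp add: forall_bit zero_vec_4 cubic_vecs_def Int_insert_left)

lemma dC_planes_3_bit: "dC_planes 3 = {plane (V4 0 1 1 0)}"
proof -
  have "dC_planes 3 = plane ` {V4 0 1 1 0}"
    unfolding dC_planes_bit
    by (rule arg_cong[where f = "image plane"], rule Collect_bit_vec_4_eqI)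
      (simp add: forall_bit zero_vec_4 cubic_vecs_def Int_insert_left)
  then show ?thesis by simp
qed

lemma Gamma_planes_Un_onebar_planes_bit: "Gamma_planes \<union> onebar_planes = (dC_planes 1 :: bit pt set set)"
proof -
  have "Gamma_planes \<subseteq> (dC_planes 1 :: bit pt set set)"
    unfolding Gamma_planes_bit dC_planes_1_bit osc_coeffs_def by auto
  then show ?thesis
    unfolding onebar_planes_def dC_planes_def by blast
qed

lemma card_onebar_planes_bit: "card (onebar_planes :: bit pt set set) = 3"
proof -
  have "onebar_planes = dC_planes 1 - (Gamma_planes :: bit pt set set)"
    unfolding onebar_planes_def dC_planes_def by blast
  also have "\<dots> = plane ` {V4 0 1 1 1, V4 1 0 0 1, V4 1 1 1 0}"
    unfolding dC_planes_1_bit Gamma_planes_bit image_set_diff[OF inj_plane_bit, symmetric]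
    by (rule arg_cong[where f = "image plane"]) (auto simp: osc_coeffs_def)
  finally show ?thesis
    using card_plane_image_bit[of "{V4 0 1 1 1, V4 1 0 0 1, V4 1 1 1 0}"] by simp
qed

lemma card_osc_through_bit:
  "card {\<pi> \<in> Gamma_planes. {x} \<in> \<pi>} = card (osc_coeffs \<inter> {c. pdot c x = 0})" if "x \<noteq> 0"
proof -
  have "{\<pi> \<in> Gamma_planes. {x} \<in> \<pi>} = plane ` (osc_coeffs \<inter> {c. pdot c x = 0})"
    unfolding Gamma_planes_bit plane_bit using that by auto
  then show ?thesis by (simp add: card_plane_image_bit)
qed

lemma T_points_bit:
  "T_points = singletons {V4 0 1 0 0, V4 1 1 0 0, V4 0 0 1 0, V4 0 0 1 1, V4 1 0 1 0, V4 0 1 0 1}"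
proof -
  have "T_points = singletons {x. x \<noteq> 0 \<and> x \<notin> cubic_vecs \<and> x \<in> tangent_vecs}"
    unfolding T_points_def points_bit singletons_Collect singleton_in_Cub_bit on_tangent_bit
    by (simp add: Collect_conj_eq)
  also have "{x. x \<noteq> 0 \<and> x \<notin> cubic_vecs \<and> x \<in> tangent_vecs}
      = {V4 0 1 0 0, V4 1 1 0 0, V4 0 0 1 0, V4 0 0 1 1, V4 1 0 1 0, V4 0 1 0 1}"
    by (rule Collect_bit_vec_4_eqI) (simp add: forall_bit zero_vec_4 cubic_vecs_def tangent_vecs_def)
  finally show ?thesis .
qed

lemma muGamma_points_bit:
  "muGamma_points mu = singletons
     {x. x \<noteq> 0 \<and> x \<notin> cubic_vecs \<and> x \<notin> tangent_vecs
       \<and> card (osc_coeffs \<inter> {c. pdot c x = 0}) = mu}"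
proof -
  have "(\<forall>t. {x} \<notin> tangent t) \<longleftrightarrow> x \<notin> tangent_vecs" for x :: "bit ^ 4"
    using on_tangent_bit by blast
  then show ?thesis
    unfolding muGamma_points_def points_bit singletons_Collect singleton_in_Cub_bit
    by (auto simp: card_osc_through_bit)
qed

lemma muGamma_points_0_bit: "muGamma_points 0 = singletons {V4 1 1 0 1, V4 1 0 1 1}"
  unfolding muGamma_points_bit
  by (rule arg_cong[where f = singletons], rule Collect_bit_vec_4_eqI)
    (simp add: forall_bit zero_vec_4 cubic_vecs_def tangent_vecs_def osc_coeffs_def Int_insert_left)

lemma muGamma_points_1_bit: "muGamma_points 1 = singletons {V4 1 0 0 1, V4 0 1 1 1, V4 1 1 1 0}"
  unfolding muGamma_points_bit
  by (rule arg_cong[where f = singletons], rule Collect_bit_vec_4_eqI)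
    (simp add: forall_bit zero_vec_4 cubic_vecs_def tangent_vecs_def osc_coeffs_def Int_insert_left)

lemma muGamma_points_3_bit: "muGamma_points 3 = singletons {V4 0 1 1 0}"
  unfolding muGamma_points_bit
  by (rule arg_cong[where f = singletons], rule Collect_bit_vec_4_eqI)
    (simp add: forall_bit zero_vec_4 cubic_vecs_def tangent_vecs_def osc_coeffs_def Int_insert_left)

lemma muGamma_points_1_eq_subset_sums: "muGamma_points 1 = singletons (subset_sums 2 cubic_vecs)"
  unfolding muGamma_points_1_bit cubic_vecs_def by (simp add: subset_sums_three insert_commute)

lemma muGamma_points_3_eq_subset_sums: "muGamma_points 3 = singletons (subset_sums 3 cubic_vecs)"
  unfolding muGamma_points_3_bit cubic_vecs_def by (simp add: subset_sums_three)

lemma T_points_Un_muGamma_points_0: "T_points \<union> muGamma_points 0 = points - plane (V4 0 1 1 0)"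
proof -
  have "points - plane (V4 0 1 1 0) = singletons (- {0} - {x. x \<noteq> 0 \<and> pdot (V4 0 1 1 0) x = 0})"
    unfolding points_bit plane_bit by (simp add: image_set_diff inj_def)
  also have "- {0} - {x. x \<noteq> 0 \<and> pdot (V4 0 1 1 0) x = 0}
      = {x. x \<noteq> 0 \<and> pdot (V4 0 1 1 0) x \<noteq> 0}"
    by auto
  also have "{x. x \<noteq> 0 \<and> pdot (V4 0 1 1 0) x \<noteq> 0} =
      {V4 0 1 0 0, V4 1 1 0 0, V4 0 0 1 0, V4 0 0 1 1, V4 1 0 1 0, V4 0 1 0 1, V4 1 1 0 1, V4 1 0 1 1}"
    by (rule Collect_bit_vec_4_eqI) (simp add: forall_bit zero_vec_4)
  finally show ?thesis
    unfolding T_points_bit muGamma_points_0_bit by auto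
qed

section \<open>The group \<open>G\<^sub>2\<close>\<close>

lemma Gq_permutes_cubic_vecs:
  assumes "A \<in> Gq" shows "(\<lambda>x. x v* A) ` cubic_vecs = cubic_vecs"
proof -
  have "singletons ((\<lambda>x. x v* A) ` cubic_vecs) = singletons cubic_vecs"
    using assms unfolding Gq_def Cub_bit image_image proj_pt_singleton by blast
  then show ?thesis by (simp add: inj_image_eq_iff inj_def)
qed

lemma subset_sums_invariant: "pt.invariant (singletons (subset_sums k cubic_vecs))"
proof (rule invariant_singletons)
  fix A :: "bit ^ 4 ^ 4" and x
  assume "A \<in> Gq" "x \<in> subset_sums k cubic_vecs"
  have "inj_on (\<lambda>x. x v* A) cubic_vecs"
    using inj_vector_matrix_Gq[OF \<open>A \<in> Gq\<close>] by (rule inj_on_subset) simp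
  then have "(\<lambda>x. x v* A) ` subset_sums k cubic_vecs
      \<subseteq> subset_sums k ((\<lambda>x. x v* A) ` cubic_vecs)"
    by (intro subset_sums_image_subset vector_matrix_left_distrib vector_matrix_mult_0)
  with \<open>A \<in> Gq\<close> \<open>x \<in> subset_sums k cubic_vecs\<close> show "x v* A \<in> subset_sums k cubic_vecs"
    by (auto simp: Gq_permutes_cubic_vecs)
qed

text \<open>Three involutions in \<open>G\<^sub>2\<close>, given by their rows: the first two swap \<open>P(\<infinity>)\<close> and
  \<open>P(0)\<close> (differently off the cubic), the third swaps \<open>P(0)\<close> and \<open>P(1)\<close>.\<close>

definition cubic_gens :: "(bit ^ 4 ^ 4) set" where
  "cubic_gens =
    {vector [V4 0 0 0 1, V4 0 0 1 0, V4 0 1 0 0, V4 1 0 0 0],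
     vector [V4 0 0 0 1, V4 1 0 1 1, V4 1 1 0 1, V4 1 0 0 0],
     vector [V4 1 0 0 0, V4 0 1 0 0, V4 0 0 1 0, V4 1 1 1 1]}"

lemma cubic_gens_involution: "g \<in> cubic_gens \<Longrightarrow> g ** g = mat 1"
  unfolding cubic_gens_def
  by (elim insertE; simp add: vector_4_matrix_mult_matrix vector_4_matrix_mult mat_1_vector_4)

lemma involution_in_Gq:
  assumes "A ** A = mat 1" "(\<lambda>x. x v* A) ` cubic_vecs = cubic_vecs"
  shows "A \<in> Gq"
proof -
  have "proj_pt A ` Cub = singletons ((\<lambda>x. x v* A) ` cubic_vecs)"
    unfolding Cub_bit image_image proj_pt_singleton ..
  then have "proj_pt A ` Cub = Cub"
    unfolding assms(2) Cub_bit .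
  with assms(1) show ?thesis
    unfolding Gq_def invertible_def by blast
qed

lemma cubic_gens_subset_Gq: "cubic_gens \<subseteq> Gq"
proof
  fix g assume "g \<in> cubic_gens"
  moreover have "(\<lambda>x. x v* g) ` cubic_vecs = cubic_vecs"
    using \<open>g \<in> cubic_gens\<close> unfolding cubic_gens_def cubic_vecs_def
    by (elim insertE; simp add: vector_4_matrix_mult insert_commute)
  ultimately show "g \<in> Gq"
    by (intro involution_in_Gq cubic_gens_involution)
qed

lemma proj_plane_cubic_gens: "g \<in> cubic_gens \<Longrightarrow> proj_plane g (plane c) = plane (g *v c)"
  using proj_plane_plane[OF cubic_gens_involution cubic_gens_involution] .

lemma dC_planes_reachable:
  "dC_planes 0 \<subseteq> pl.orbit (plane (V4 1 0 1 1))"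
  "dC_planes 1 \<subseteq> pl.orbit (plane (V4 1 0 0 0))"
  "dC_planes 2 \<subseteq> pl.orbit (plane (V4 0 0 1 0))"
proof -
  note simps = numeral_eq_Suc pl.expand_def proj_plane_cubic_gens inj_plane_bit[THEN inj_eq]
    matrix_vector_4_mult cubic_gens_def
  note orbit = pl.funpow_expand_subset_orbit[OF cubic_gens_subset_Gq, of 4]
  have "dC_planes 0 \<subseteq> (pl.expand cubic_gens ^^ 4) {plane (V4 1 0 1 1)}"
    unfolding dC_planes_0_bit by (simp add: simps)
  then show "dC_planes 0 \<subseteq> pl.orbit (plane (V4 1 0 1 1))"
    using orbit by blast
  have "dC_planes 1 \<subseteq> (pl.expand cubic_gens ^^ 4) {plane (V4 1 0 0 0)}"
    unfolding dC_planes_1_bit by (simp add: simps)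
  then show "dC_planes 1 \<subseteq> pl.orbit (plane (V4 1 0 0 0))"
    using orbit by blast
  have "dC_planes 2 \<subseteq> (pl.expand cubic_gens ^^ 4) {plane (V4 0 0 1 0)}"
    unfolding dC_planes_2_bit by (simp add: simps)
  then show "dC_planes 2 \<subseteq> pl.orbit (plane (V4 0 0 1 0))"
    using orbit by blast
qed

lemma point_classes_reachable:
  "Cub \<subseteq> pt.orbit {V4 1 0 0 0}"
  "T_points \<union> muGamma_points 0 \<subseteq> pt.orbit {V4 0 1 0 0}"
  "muGamma_points 1 \<subseteq> pt.orbit {V4 1 0 0 1}"
proof -
  note simps = numeral_eq_Suc pt.expand_def proj_pt_singleton vector_4_matrix_mult cubic_gens_def
  note orbit = pt.funpow_expand_subset_orbit[OF cubic_gens_subset_Gq, of 4]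
  have "Cub \<subseteq> (pt.expand cubic_gens ^^ 4) {{V4 1 0 0 0}}"
    unfolding Cub_bit cubic_vecs_def by (simp add: simps)
  then show "Cub \<subseteq> pt.orbit {V4 1 0 0 0}"
    using orbit by blast
  have "T_points \<union> muGamma_points 0 \<subseteq> (pt.expand cubic_gens ^^ 4) {{V4 0 1 0 0}}"
    unfolding T_points_bit muGamma_points_0_bit by (simp add: simps)
  then show "T_points \<union> muGamma_points 0 \<subseteq> pt.orbit {V4 0 1 0 0}"
    using orbit by blast
  have "muGamma_points 1 \<subseteq> (pt.expand cubic_gens ^^ 4) {{V4 1 0 0 1}}"
    unfolding muGamma_points_1_bit by (simp add: simps)
  then show "muGamma_points 1 \<subseteq> pt.orbit {V4 1 0 0 1}"
    using orbit by blast
qed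

lemma planes_eq_Union_dC_planes:
  "\<Union>{dC_planes 1, dC_planes 2, dC_planes 3, dC_planes 0} = (planes :: bit pt set set)"
proof -
  have "finite (Cub :: bit pt set)"
    unfolding Cub_bit cubic_vecs_def by simp
  then have "card (\<pi> \<inter> Cub) \<le> 3" for \<pi> :: "bit pt set"
    using card_mono[OF _ Int_lower2, of Cub \<pi>] card_Cub_bit by simp
  moreover have "n \<in> {1, 2, 3, 0}" if "n \<le> (3 :: nat)" for n
    using that by (simp; presburger)
  ultimately show ?thesis
    unfolding dC_planes_def by blast
qed

lemma plane_orbits_bit:
  "plane_orbits = {dC_planes 1, dC_planes 2, dC_planes 3, dC_planes 0 :: bit pt set set}"
  unfolding plane_orbits_eq
proof (rule pl.orbits_eq_classes[OF planes_eq_Union_dC_planes])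
  fix K :: "bit pt set set"
  assume K: "K \<in> {dC_planes 1, dC_planes 2, dC_planes 3, dC_planes 0}"
  then show "pl.invariant K"
    using dC_planes_invariant by blast
  have "plane (V4 1 0 0 0) \<in> dC_planes 1" "plane (V4 0 0 1 0) \<in> dC_planes 2"
    "plane (V4 1 0 1 1) \<in> dC_planes 0"
    unfolding dC_planes_0_bit dC_planes_1_bit dC_planes_2_bit by simp_all
  from K this dC_planes_reachable show "\<exists>\<pi> \<in> K. K \<subseteq> pl.orbit \<pi>"
  proof (elim insertE emptyE)
    show "\<exists>\<pi> \<in> K. K \<subseteq> pl.orbit \<pi>" if "K = dC_planes 3"
      using that pl.orbit_self unfolding dC_planes_3_bit by blast
  qed blast+
qed

lemma points_eq_Union_point_classes:
  "\<Union>{C_points, T_points \<union> muGamma_points 0, muGamma_points 3, muGamma_points 1}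
    = (points :: bit pt set)"
proof -
  have "\<Union>{C_points, T_points \<union> muGamma_points 0, muGamma_points 3, muGamma_points 1} =
      singletons (cubic_vecs \<union> {V4 0 1 0 0, V4 1 1 0 0, V4 0 0 1 0, V4 0 0 1 1, V4 1 0 1 0, V4 0 1 0 1,
        V4 1 1 0 1, V4 1 0 1 1, V4 0 1 1 0, V4 1 0 0 1, V4 0 1 1 1, V4 1 1 1 0})"
    unfolding C_points_def Cub_bit T_points_bit muGamma_points_0_bit muGamma_points_1_bit
      muGamma_points_3_bit by auto
  also have "cubic_vecs \<union> {V4 0 1 0 0, V4 1 1 0 0, V4 0 0 1 0, V4 0 0 1 1, V4 1 0 1 0, V4 0 1 0 1,
        V4 1 1 0 1, V4 1 0 1 1, V4 0 1 1 0, V4 1 0 0 1, V4 0 1 1 1, V4 1 1 1 0} = - {0}"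
    unfolding Compl_eq cubic_vecs_def
    by (rule Collect_bit_vec_4_eqI[symmetric]) (simp add: forall_bit zero_vec_4)
  finally show ?thesis
    by (simp add: points_bit)
qed

lemma point_orbits_bit:
  "point_orbits =
    {C_points, T_points \<union> muGamma_points 0, muGamma_points 3, muGamma_points 1 :: bit pt set}"
  unfolding point_orbits_eq
proof (rule pt.orbits_eq_classes[OF points_eq_Union_point_classes])
  fix K :: "bit pt set"
  assume K: "K \<in> {C_points, T_points \<union> muGamma_points 0, muGamma_points 3, muGamma_points 1}"
  have "pl.invariant (dC_planes 3 :: bit pt set set)"
    by (rule dC_planes_invariant)
  then have "pt.invariant (plane (V4 0 1 1 0))"
    unfolding dC_planes_3_bit by (rule invariant_plane_points)
  then have "pt.invariant (T_points \<union> muGamma_points 0 :: bit pt set)"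
    unfolding T_points_Un_muGamma_points_0
    by (intro pt.invariant_Diff points_invariant)
  with K Cub_invariant subset_sums_invariant show "pt.invariant K"
    unfolding C_points_def muGamma_points_1_eq_subset_sums muGamma_points_3_eq_subset_sums
    by (elim insertE emptyE) simp_all
  have "{V4 1 0 0 0} \<in> C_points" "{V4 0 1 0 0} \<in> T_points \<union> muGamma_points 0"
    "{V4 1 0 0 1} \<in> muGamma_points 1"
    unfolding C_points_def Cub_bit cubic_vecs_def T_points_bit muGamma_points_1_bit by simp_all
  from K this point_classes_reachable[folded C_points_def] show "\<exists>P \<in> K. K \<subseteq> pt.orbit P"
  proof (elim insertE emptyE)
    show "\<exists>P \<in> K. K \<subseteq> pt.orbit P" if "K = muGamma_points 3"
      using that pt.orbit_self unfolding muGamma_points_3_bit by simp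
  qed blast+
qed

lemma dC_planes_neq:
  assumes "(dC_planes d :: 'a::field pt set set) \<noteq> {}" "d \<noteq> d'"
  shows "dC_planes d \<noteq> (dC_planes d' :: 'a pt set set)"
proof -
  from assms(1) obtain \<pi> :: "'a pt set" where \<pi>: "\<pi> \<in> dC_planes d" by blast
  with assms(2) have "\<pi> \<notin> dC_planes d'"
    by (simp add: dC_planes_def)
  with \<pi> show ?thesis by blast
qed

lemma point_classes_disjoint:
  "C_points \<inter> T_points = ({} :: 'a::field pt set)"
  "C_points \<inter> muGamma_points mu = ({} :: 'a::field pt set)"
  "T_points \<inter> muGamma_points mu = ({} :: 'a::field pt set)"
  "mu \<noteq> mu' \<Longrightarrow> muGamma_points mu \<inter> muGamma_points mu' = ({} :: 'a::field pt set)"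
  unfolding C_points_def T_points_def muGamma_points_def by auto

lemma plane_classes_distinct_bit:
  "distinct [dC_planes 1, dC_planes 2, dC_planes 3, dC_planes 0 :: bit pt set set]"
proof -
  have "dC_planes 1 \<noteq> ({} :: bit pt set set)" "dC_planes 2 \<noteq> ({} :: bit pt set set)"
    "dC_planes 3 \<noteq> ({} :: bit pt set set)" "dC_planes 0 \<noteq> ({} :: bit pt set set)"
    unfolding dC_planes_0_bit dC_planes_1_bit dC_planes_2_bit dC_planes_3_bit by simp_all
  then show ?thesis
    by (simp add: dC_planes_neq)
qed

lemma point_classes_distinct_bit:
  "distinct [C_points, T_points \<union> muGamma_points 0, muGamma_points 3, muGamma_points 1 :: bit pt set]"
proof -
  have "C_points \<noteq> ({} :: bit pt set)" "T_points \<noteq> ({} :: bit pt set)"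
    "muGamma_points 3 \<noteq> ({} :: bit pt set)"
    unfolding C_points_def Cub_bit cubic_vecs_def T_points_bit muGamma_points_3_bit by simp_all
  moreover have "C_points \<inter> (T_points \<union> muGamma_points 0) = ({} :: bit pt set)"
    "C_points \<inter> muGamma_points 3 = ({} :: bit pt set)"
    "C_points \<inter> muGamma_points 1 = ({} :: bit pt set)"
    "(T_points \<union> muGamma_points 0) \<inter> muGamma_points 3 = ({} :: bit pt set)"
    "(T_points \<union> muGamma_points 0) \<inter> muGamma_points 1 = ({} :: bit pt set)"
    "muGamma_points 3 \<inter> muGamma_points 1 = ({} :: bit pt set)"
    using point_classes_disjoint[where 'a = bit] by (simp_all add: Int_Un_distrib Int_Un_distrib2)
  ultimately show ?thesis
    by auto
qed

theorem theorem4p2: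
  defines "N1 \<equiv> (Gamma_planes :: bit pt set set) \<union> onebar_planes"
      and "N2 \<equiv> (dC_planes 2 :: bit pt set set)"
      and "N3 \<equiv> (dC_planes 3 :: bit pt set set)"
      and "N4 \<equiv> (dC_planes 0 :: bit pt set set)"
      and "M1 \<equiv> (C_points :: bit pt set)"
      and "M2 \<equiv> (T_points :: bit pt set) \<union> muGamma_points 0"
      and "M3 \<equiv> (muGamma_points 3 :: bit pt set)"
      and "M4 \<equiv> (muGamma_points 1 :: bit pt set)"
  shows "plane_orbits = {N1, N2, N3, N4} \<and> card {N1, N2, N3, N4} = 4
       \<and> card (Gamma_planes :: bit pt set set) = 3 \<and> card (onebar_planes :: bit pt set set) = 3
       \<and> card N1 = 6 \<and> card N2 = 6 \<and> card N3 = 1 \<and> card N4 = 2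
       \<and> point_orbits = {M1, M2, M3, M4} \<and> card {M1, M2, M3, M4} = 4
       \<and> card (T_points :: bit pt set) = 6 \<and> card (muGamma_points 0 :: bit pt set) = 2
       \<and> card M1 = 3 \<and> card M2 = 8 \<and> card M3 = 1 \<and> card M4 = 3"
proof -
  have N1: "N1 = dC_planes 1"
    unfolding N1_def by (rule Gamma_planes_Un_onebar_planes_bit)
  have "card {N1, N2, N3, N4} = 4" "card {M1, M2, M3, M4} = 4"
    using distinct_card[OF plane_classes_distinct_bit] distinct_card[OF point_classes_distinct_bit]
    by (simp_all add: N1 N2_def N3_def N4_def M1_def M2_def M3_def M4_def)
  moreover have "card N1 = 6" "card N2 = 6" "card N3 = 1" "card N4 = 2"
    "card (Gamma_planes :: bit pt set set) = 3"
    unfolding N1 N2_def N3_def N4_def dC_planes_0_bit dC_planes_1_bit dC_planes_2_bit dC_planes_3_bit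
      Gamma_planes_bit card_plane_image_bit
    by (simp_all add: osc_coeffs_def)
  moreover have "card M1 = 3" "card M2 = 8" "card M3 = 1" "card M4 = 3"
    "card (T_points :: bit pt set) = 6" "card (muGamma_points 0 :: bit pt set) = 2"
    unfolding M1_def M2_def M3_def M4_def C_points_def Cub_bit T_points_bit muGamma_points_0_bit
      muGamma_points_1_bit muGamma_points_3_bit image_Un[symmetric] card_singletons
    by (simp_all add: cubic_vecs_def)
  ultimately show ?thesis
    using plane_orbits_bit point_orbits_bit card_onebar_planes_bit
    by (simp add: N1 N2_def N3_def N4_def M1_def M2_def M3_def M4_def)
qed

end
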